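(* Assume $p>2q$. For every integer $n\in\mathbb{N}$ there exists an integer $m$ such that $m$ is reachable from $n$ in $\mathcal{T}_{p/q}$ but not reachable from $n$ in $\widehat{\mathcal{T}_{p/q}}$.
   Context: Let $p>q>1$ be coprime integers, $A_p=\{0,\dots,p-1\}$ and $B=\{p-(2q-1),\dots,p-1\}$. For $n\in\mathbb{N}$ and $a\in\mathbb{Z}$, let $\tau(n,a)=\frac{np+a}{q}$, defined only when $q$ divides $np+a$. Let $\mathcal{T}_{p/q}$ (resp. $\widehat{\mathcal{T}_{p/q}}$) be the deterministic automaton with state set $\mathbb{N}$, alphabet $A_p$ (resp. $B$), and transitions $n\xrightarrow{a}\tau(n,a)$ for $a$ in the alphabet with $\tau(n,a)$ defined. A state $m$ is reachable from $n$ if there is a path (of transitions) from $n$ to $m$. *)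

theory Defs
  imports Main
begin

definition tau_defined :: "nat \<Rightarrow> nat \<Rightarrow> nat \<Rightarrow> int \<Rightarrow> bool" where
  "tau_defined p q n a \<longleftrightarrow> int q dvd (int n * int p + a)"

definition tau :: "nat \<Rightarrow> nat \<Rightarrow> nat \<Rightarrow> int \<Rightarrow> int" where
  "tau p q n a = (int n * int p + a) div int q"

definition alphA :: "nat \<Rightarrow> int set" where
  "alphA p = {0 .. int p - 1}"

definition alphB :: "nat \<Rightarrow> nat \<Rightarrow> int set" where
  "alphB p q = {int p - (2 * int q - 1) .. int p - 1}"

definition transition :: "nat \<Rightarrow> nat \<Rightarrow> int set \<Rightarrow> nat \<Rightarrow> nat \<Rightarrow> bool" where
  "transition p q Al n m \<longleftrightarrow>
     (\<exists>a\<in>Al. tau_defined p q n a \<and> int m = tau p q n a)"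

definition reachable :: "nat \<Rightarrow> nat \<Rightarrow> int set \<Rightarrow> nat \<Rightarrow> nat \<Rightarrow> bool" where
  "reachable p q Al n m \<longleftrightarrow> (transition p q Al)\<^sup>*\<^sup>* n m"

end

theory Submission
  imports Defs
begin

text \<open>
  In the automaton with alphabet A_p every state t has the predecessor qt div p, read with the
  digit qt mod p. Hence the image of an interval of reachable states is a longer interval
  (this uses p > 2q), and from n one reaches an interval of length q + 1. It contains a positive
  multiple qj of q, from which the digit 0 leads to m = jp. A transition into a multiple of p
  would need a digit divisible by p, and no digit of B is, so in the second automaton m is
  reachable from n only if m = n, which monotonicity of the first automaton rules out.
\<close>

lemma transition_iff:
  assumes "0 < q"
  shows "transition p q Al s t \<longleftrightarrow> (\<exists>a\<in>Al. int q * int t = int s * int p + a)"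
proof
  assume "transition p q Al s t"
  then obtain a where "a \<in> Al" "int q dvd int s * int p + a" "int t = (int s * int p + a) div int q"
    unfolding transition_def tau_defined_def tau_def by blast
  then show "\<exists>a\<in>Al. int q * int t = int s * int p + a" by auto
next
  assume "\<exists>a\<in>Al. int q * int t = int s * int p + a"
  then obtain a where a: "a \<in> Al" "int s * int p + a = int q * int t" by auto
  then show "transition p q Al s t"
    unfolding transition_def tau_defined_def tau_def using assms
    by (metis dvd_triv_left nonzero_mult_div_cancel_left of_nat_0_less_iff less_irrefl)
qed

lemma transition_alphA_div:
  assumes "0 < q" "0 < p"
  shows "transition p q (alphA p) (q * t div p) t"
proof -
  have "int q * int t = int (q * t div p) * int p + int (q * t mod p)"
    by (metis div_mult_mod_eq of_nat_add of_nat_mult)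
  moreover have "int (q * t mod p) \<in> alphA p"
    using mod_less_divisor[OF assms(2), of "q * t"] unfolding alphA_def by simp
  ultimately show ?thesis using transition_iff[OF assms(1)] by blast
qed

lemma reachable_alphA_ge:
  assumes "reachable p q (alphA p) n s" "0 < q" "q \<le> p"
  shows "n \<le> s"
  using assms(1) unfolding reachable_def
proof (induction rule: rtranclp_induct)
  case (step s t)
  then obtain a where "0 \<le> a" "int q * int t = int s * int p + a"
    using assms(2) by (auto simp: transition_iff alphA_def)
  moreover have "int s * int q \<le> int s * int p" using assms(3) by (simp add: mult_left_mono)
  ultimately have "int (q * s) \<le> int (q * t)" by (simp add: ac_simps)
  then have "q * s \<le> q * t" by (simp only: of_nat_le_iff)
  with step.IH assms(2) show ?case by simp
qed simp

lemma div_image_longer_interval: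
  fixes p q :: nat
  assumes "0 < q" "2 * q < p" "1 \<le> K"
  shows "\<exists>L'. (\<lambda>t. q * t div p) ` {L'..<L' + Suc K} \<subseteq> {L..<L + K}"
proof (intro exI subsetI)
  define L' where "L' = L * p div q + 1"
  have "q * (L * p div q) + L * p mod q = L * p" "L * p mod q < q"
    using assms(1) by (simp_all add: mult.commute[of q])
  moreover have "q * L' = q * (L * p div q) + q" unfolding L'_def by simp
  ultimately have lower: "L * p < q * L'" and upper: "q * L' \<le> L * p + q" by linarith+
  have "q + K * q < K * p"
  proof -
    have "K * (2 * q + 1) \<le> K * p" using assms(2) by (intro mult_le_mono2) simp
    moreover have "K * (2 * q + 1) = K * q + K * q + K" by (simp add: algebra_simps)
    moreover have "q \<le> K * q" using assms(3) by simp
    ultimately show ?thesis using assms(3) by linarith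
  qed
  fix x assume "x \<in> (\<lambda>t. q * t div p) ` {L'..<L' + Suc K}"
  then obtain t where t: "L' \<le> t" "t \<le> L' + K" and x: "x = q * t div p" by auto
  have "L * p \<le> q * t" using lower mult_le_mono2[OF t(1), of q] by linarith
  then have "L * p div p \<le> x" unfolding x by (rule div_le_mono)
  then have "L \<le> x" using assms(2) by simp
  moreover have "q * t < (L + K) * p"
    using upper mult_le_mono2[OF t(2), of q] \<open>q + K * q < K * p\<close> by (simp add: algebra_simps)
  then have "x < L + K" unfolding x by (simp add: less_mult_imp_div_less)
  ultimately show "x \<in> {L..<L + K}" by simp
qed

lemma reachable_alphA_interval:
  assumes "0 < q" "2 * q < p" "1 \<le> K"
  shows "\<exists>L. \<forall>s\<in>{L..<L + K}. reachable p q (alphA p) n s"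
  using assms(3)
proof (induction K rule: dec_induct)
  case base
  show ?case by (intro exI[of _ n]) (simp add: reachable_def)
next
  case (step K)
  then obtain L where L: "\<forall>s\<in>{L..<L + K}. reachable p q (alphA p) n s" by blast
  obtain L' where L': "(\<lambda>t. q * t div p) ` {L'..<L' + Suc K} \<subseteq> {L..<L + K}"
    using div_image_longer_interval[OF assms(1,2) step.hyps(1)] by blast
  have "reachable p q (alphA p) n t" if "t \<in> {L'..<L' + Suc K}" for t
  proof -
    have "q * t div p \<in> {L..<L + K}" using L' that by (rule subsetD[OF _ imageI])
    then have "reachable p q (alphA p) n (q * t div p)" using L by blast
    moreover have "transition p q (alphA p) (q * t div p) t"
      using transition_alphA_div[OF assms(1)] assms(2) by simp
    ultimately show ?thesis unfolding reachable_def by (rule rtranclp.rtrancl_into_rtrancl)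
  qed
  then show ?case by blast
qed

lemma no_transition_alphB_to_multiple:
  assumes "0 < q" "2 * q \<le> p" "p dvd m"
  shows "\<not> transition p q (alphB p q) s m"
proof
  assume "transition p q (alphB p q) s m"
  then obtain a where a: "a \<in> alphB p q" "int q * int m = int s * int p + a"
    using transition_iff[OF assms(1)] by blast
  have "int p dvd int q * int m" using assms(3) by simp
  then have "int p dvd a" using a(2) by (metis dvd_add_right_iff dvd_triv_right)
  moreover have "0 < a" "a < int p" using a(1) assms(2) unfolding alphB_def by auto
  ultimately show False using zdvd_not_zless by blast
qed

lemma reachable_alphB_multiple_eq:
  assumes "reachable p q (alphB p q) n m" "0 < q" "2 * q \<le> p" "p dvd m"
  shows "m = n"
  using assms(1) no_transition_alphB_to_multiple[OF assms(2-4)]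
  unfolding reachable_def by (cases rule: rtranclp.cases) auto

lemma multiple_in_interval:
  fixes q L :: nat
  assumes "0 < q"
  obtains j where "L < q * j" "q * j \<le> L + q"
proof
  have "q * (L div q) + L mod q = L" "L mod q < q"
    using assms by (simp_all add: mult.commute[of q])
  moreover have "q * (L div q + 1) = q * (L div q) + q" by simp
  ultimately show "L < q * (L div q + 1)" "q * (L div q + 1) \<le> L + q" by linarith+
qed

theorem mainTheorem13:
  fixes p q :: nat
  assumes "1 < q" and "q < p" and "coprime p q" and "2 * q < p"
  shows "\<forall>n::nat. \<exists>m::nat. reachable p q (alphA p) n m \<and> \<not> reachable p q (alphB p q) n m"
proof
  fix n
  have q: "0 < q" using assms(1) by simp
  obtain L where L: "\<forall>s\<in>{L..<L + Suc q}. reachable p q (alphA p) n s"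
    using reachable_alphA_interval[OF q assms(4), of "Suc q"] by auto
  obtain j where j: "L < q * j" "q * j \<le> L + q" using multiple_in_interval[OF q] .
  define m where "m = p * j"
  have rs: "reachable p q (alphA p) n (q * j)" using L j by simp
  have "q * m div p = q * j" unfolding m_def using assms(2) by simp
  then have "transition p q (alphA p) (q * j) m" using transition_alphA_div[OF q, of p m] assms(2) by simp
  then have rA: "reachable p q (alphA p) n m" using rs unfolding reachable_def by simp
  have "n \<le> q * j" using reachable_alphA_ge[OF rs q] assms(2) by simp
  moreover have "q * j < m"
    unfolding m_def using assms(2) by (rule mult_strict_right_mono) (metis j(1) gr0I less_nat_zero_code mult_0_right)
  ultimately have "m \<noteq> n" by simp
  then have "\<not> reachable p q (alphB p q) n m"
    using reachable_alphB_multiple_eq[OF _ q] assms(4) unfolding m_def by fastforce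
  with rA show "\<exists>m. reachable p q (alphA p) n m \<and> \<not> reachable p q (alphB p q) n m" by blast
qed

end
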